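(* Let $(A_n)$ be a well-behaved sequence of matrices and $k\ge2$ an integer. Then $\mathbb E\,N_k^{c}(G^{\mathrm{PM}}(A_n))=o(n)$.
   Context: $A_n=(a_{ij})$ is a symmetric non-negative $n\times n$ matrix. The sequence $(A_n)$ is well behaved if all diagonal entries are $0$ and $\max_{i,j}a_{ij}=o(n)$. $G^{\mathrm{PM}}(A_n)$ is the Poisson multigraph on $[n]$ in which the numbers of copies of the edges $ij$ are independent Poisson random variables with mean $a_{ij}/n$. For a multigraph $G$, $N_k^{c}(G)$ is the number of vertices in components of order $k$ that are not trees (i.e. contain a cycle, where a multiple edge counts as a cycle). *)

theory Defs
  imports "HOL-Probability.Probability" "HOL-Library.Landau_Symbols"
begin

definition pois :: "real \<Rightarrow> nat pmf" where
  "pois r = (if r > 0 then poisson_pmf r else return_pmf 0)"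

text \<open>A sequence of matrices: A n i j is the (i,j) entry of A_n, for i, j < n
  (vertex set [n] is represented as {0..<n}).\<close>
definition well_behaved :: "(nat \<Rightarrow> nat \<Rightarrow> nat \<Rightarrow> real) \<Rightarrow> bool" where
  "well_behaved A \<longleftrightarrow>
     (\<forall>n i j. i < n \<longrightarrow> j < n \<longrightarrow> A n i j \<ge> 0 \<and> A n i j = A n j i) \<and>
     (\<forall>n i. i < n \<longrightarrow> A n i i = 0) \<and>
     (\<lambda>n. Max ({A n i j | i j. i < n \<and> j < n} \<union> {0})) \<in> o(\<lambda>n. real n)"

text \<open>A multigraph on {0..<n} is given by edge multiplicities m (i,j) for i < j < n.\<close>
definition edge_pairs :: "nat \<Rightarrow> (nat \<times> nat) set" where
  "edge_pairs n = {(i, j). i < j \<and> j < n}"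

definition G_PM :: "(nat \<Rightarrow> nat \<Rightarrow> nat \<Rightarrow> real) \<Rightarrow> nat \<Rightarrow> (nat \<times> nat \<Rightarrow> nat) pmf" where
  "G_PM A n = Pi_pmf (edge_pairs n) 0 (\<lambda>(i, j). pois (A n i j / real n))"

definition mult :: "(nat \<times> nat \<Rightarrow> nat) \<Rightarrow> nat \<Rightarrow> nat \<Rightarrow> nat" where
  "mult m i j = m (min i j, max i j)"

definition adj :: "nat \<Rightarrow> (nat \<times> nat \<Rightarrow> nat) \<Rightarrow> nat \<Rightarrow> nat \<Rightarrow> bool" where
  "adj n m i j \<longleftrightarrow> i < n \<and> j < n \<and> i \<noteq> j \<and> mult m i j > 0"

definition component :: "nat \<Rightarrow> (nat \<times> nat \<Rightarrow> nat) \<Rightarrow> nat \<Rightarrow> nat set" where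
  "component n m v = {u. u < n \<and> (adj n m)\<^sup>*\<^sup>* v u}"

definition edges_in :: "nat \<Rightarrow> (nat \<times> nat \<Rightarrow> nat) \<Rightarrow> nat set \<Rightarrow> nat" where
  "edges_in n m C = (\<Sum>p\<in>edge_pairs n \<inter> (C \<times> C). m p)"

text \<open>A connected multigraph is a tree iff it has exactly |C|-1 edges (with
  multiplicity); a multiple edge then counts as a cycle.\<close>
definition is_tree_component :: "nat \<Rightarrow> (nat \<times> nat \<Rightarrow> nat) \<Rightarrow> nat set \<Rightarrow> bool" where
  "is_tree_component n m C \<longleftrightarrow> edges_in n m C + 1 = card C"

definition Nkc :: "nat \<Rightarrow> nat \<Rightarrow> (nat \<times> nat \<Rightarrow> nat) \<Rightarrow> nat" where
  "Nkc n k m = card {v. v < n \<and> card (component n m v) = k \<and>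
                        \<not> is_tree_component n m (component n m v)}"

end

theory Submission
  imports Defs
begin

text \<open>
  A component that is not a tree contains an edge copy whose removal keeps its endpoints
  connected: otherwise every edge copy is a bridge, and deleting the edges one at a time while
  counting components gives \<open>|E(C)| = |C| - 1\<close>. Hence \<open>N\<^sub>k\<^sup>c(m)\<close> is at most the sum over
  vertices \<open>v\<close> and pairs \<open>p\<close> of \<open>m\<^sub>p\<close> times the indicator that \<open>p\<close> lies in the order-\<open>k\<close>
  component of \<open>v\<close> in \<open>m - e\<^sub>p\<close>. For independent Poisson multiplicities the size-bias identity
  \<open>E[m\<^sub>p g(m - e\<^sub>p)] = \<lambda>\<^sub>p E[g(m)]\<close> removes the factor \<open>m\<^sub>p\<close>; as an order-\<open>k\<close> component contains
  at most \<open>k\<^sup>2\<close> pairs and \<open>\<lambda>\<^sub>p \<le> max a\<^sub>i\<^sub>j / n\<close>, the expectation is at most \<open>k\<^sup>2 max a\<^sub>i\<^sub>j = o(n)\<close>.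
\<close>

definition drop_edge :: "('a \<Rightarrow> nat) \<Rightarrow> 'a \<Rightarrow> 'a \<Rightarrow> nat" where
  "drop_edge m p = m(p := m p - 1)"

lemma drop_edge_le: "drop_edge m p \<le> m"
  by (simp add: drop_edge_def le_fun_def)

lemma drop_edge_mono: "m1 \<le> m2 \<Longrightarrow> drop_edge m1 p \<le> drop_edge m2 p"
  unfolding drop_edge_def le_fun_def by (simp del: split_paired_All add: diff_le_mono)

lemma adj_sym: "adj n m x y \<Longrightarrow> adj n m y x"
  by (auto simp: adj_def mult_def min.commute max.commute)

lemma adj_rtranclp_sym: "(adj n m)\<^sup>*\<^sup>* x y \<Longrightarrow> (adj n m)\<^sup>*\<^sup>* y x"
  by (induction rule: rtranclp_induct) (auto intro: adj_sym converse_rtranclp_into_rtranclp)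

lemma adj_mono: "m1 \<le> m2 \<Longrightarrow> adj n m1 x y \<Longrightarrow> adj n m2 x y"
  unfolding adj_def mult_def le_fun_def by (meson order.strict_trans2)

lemma adj_rtranclp_mono: "m1 \<le> m2 \<Longrightarrow> (adj n m1)\<^sup>*\<^sup>* x y \<Longrightarrow> (adj n m2)\<^sup>*\<^sup>* x y"
  by (metis adj_mono mono_rtranclp)

lemma adj_drop_edge:
  "adj n m x y \<Longrightarrow> adj n (drop_edge m (a, b)) x y \<or> (x = a \<and> y = b) \<or> (x = b \<and> y = a)"
  unfolding adj_def mult_def drop_edge_def
  by (cases "(min x y, max x y) = (a, b)") (auto simp: min_def max_def split: if_splits)

lemma adj_rtranclp_drop_edge:
  assumes "(adj n m)\<^sup>*\<^sup>* x y"
  shows "(adj n (drop_edge m (a, b)))\<^sup>*\<^sup>* x y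
    \<or> (adj n (drop_edge m (a, b)))\<^sup>*\<^sup>* x a \<and> (adj n (drop_edge m (a, b)))\<^sup>*\<^sup>* b y
    \<or> (adj n (drop_edge m (a, b)))\<^sup>*\<^sup>* x b \<and> (adj n (drop_edge m (a, b)))\<^sup>*\<^sup>* a y"
  using assms
proof (induction rule: rtranclp_induct)
  case (step y z)
  from adj_drop_edge[OF step(2)]
  consider "adj n (drop_edge m (a, b)) y z" | "y = a" "z = b" | "y = b" "z = a"
    by blast
  then show ?case
  proof cases
    case 1
    then show ?thesis
      using step(3) by (meson rtranclp.rtrancl_into_rtrancl)
  qed (use step(3) in blast)+
qed simp

lemma adj_rtranclp_drop_cycle_edge:
  assumes "(adj n (drop_edge m (a, b)))\<^sup>*\<^sup>* a b"
  shows "(adj n (drop_edge m (a, b)))\<^sup>*\<^sup>* x y \<longleftrightarrow> (adj n m)\<^sup>*\<^sup>* x y"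
proof
  assume "(adj n m)\<^sup>*\<^sup>* x y"
  from adj_rtranclp_drop_edge[OF this, of a b] show "(adj n (drop_edge m (a, b)))\<^sup>*\<^sup>* x y"
    using assms adj_rtranclp_sym[OF assms] by (meson rtranclp_trans)
qed (rule adj_rtranclp_mono[OF drop_edge_le])

lemma finite_component: "finite (component n m u)"
  by (rule finite_subset[of _ "{..<n}"]) (auto simp: component_def)

lemma component_subset_lessThan: "component n m u \<subseteq> {..<n}"
  by (auto simp: component_def)

lemma component_self: "u < n \<Longrightarrow> u \<in> component n m u"
  by (simp add: component_def)

lemma component_eq: "w \<in> component n m u \<Longrightarrow> component n m w = component n m u"
  unfolding component_def by (auto intro: rtranclp_trans adj_rtranclp_sym)

lemma component_disjoint:
  assumes "\<not> (adj n m)\<^sup>*\<^sup>* a b"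
  shows "component n m a \<inter> component n m b = {}"
proof (rule ccontr)
  assume "component n m a \<inter> component n m b \<noteq> {}"
  then obtain w where "(adj n m)\<^sup>*\<^sup>* a w" "(adj n m)\<^sup>*\<^sup>* b w"
    by (auto simp: component_def)
  then have "(adj n m)\<^sup>*\<^sup>* a b"
    using adj_rtranclp_sym by (meson rtranclp_trans)
  with assms show False ..
qed

lemma sum_inverse_card_component:
  assumes "u < n"
  shows "(\<Sum>w\<in>component n m u. 1 / real (card (component n m w))) = 1"
proof -
  have "component n m u \<noteq> {}"
    using component_self[OF assms] by blast
  then show ?thesis
    using finite_component[of n m u] by (simp add: component_eq)
qed

lemma component_drop_cycle_edge:
  "(adj n (drop_edge m (a, b)))\<^sup>*\<^sup>* a b \<Longrightarrow> component n (drop_edge m (a, b)) v = component n m v"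
  by (simp add: component_def adj_rtranclp_drop_cycle_edge)

lemma component_drop_edge_joined:
  fixes m :: "nat \<times> nat \<Rightarrow> nat" and a b :: nat
  defines "m' \<equiv> drop_edge m (a, b)"
  assumes ab: "(a, b) \<in> edge_pairs n" "0 < m (a, b)"
    and u: "u \<in> component n m' a \<union> component n m' b"
  shows "component n m u = component n m' a \<union> component n m' b"
proof -
  have "adj n m a b"
    using ab by (auto simp: edge_pairs_def adj_def mult_def)
  then have ab_conn: "(adj n m)\<^sup>*\<^sup>* a b" "(adj n m)\<^sup>*\<^sup>* b a"
    using adj_sym by blast+
  have "a < n"
    using ab by (auto simp: edge_pairs_def)
  then have "component n m u = component n m a"
    using u adj_rtranclp_mono[OF drop_edge_le] ab_conn
    by (intro component_eq) (auto simp: m'_def component_def intro: rtranclp_trans)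
  also have "\<dots> = component n m' a \<union> component n m' b"
  proof (intro equalityI subsetI)
    fix w assume "w \<in> component n m a"
    then show "w \<in> component n m' a \<union> component n m' b"
      using adj_rtranclp_drop_edge[of n m a w a b]
      by (auto simp: component_def m'_def intro: rtranclp_trans adj_rtranclp_sym)
  next
    fix w assume "w \<in> component n m' a \<union> component n m' b"
    then show "w \<in> component n m a"
      using adj_rtranclp_mono[OF drop_edge_le] ab_conn
      by (auto simp: component_def m'_def intro: rtranclp_trans)
  qed
  finally show ?thesis .
qed

lemma component_drop_edge_other:
  fixes m :: "nat \<times> nat \<Rightarrow> nat" and a b :: nat
  defines "m' \<equiv> drop_edge m (a, b)"
  assumes "u \<notin> component n m' a \<union> component n m' b" and "u < n"
  shows "component n m u = component n m' u"
proof (intro equalityI subsetI)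
  fix w assume "w \<in> component n m u"
  moreover have "\<not> (adj n m')\<^sup>*\<^sup>* u a" "\<not> (adj n m')\<^sup>*\<^sup>* u b"
    using assms adj_rtranclp_sym unfolding component_def by blast+
  ultimately show "w \<in> component n m' u"
    using adj_rtranclp_drop_edge[of n m u w a b] by (auto simp: component_def m'_def)
next
  fix w assume "w \<in> component n m' u"
  then show "w \<in> component n m u"
    using adj_rtranclp_mono[OF drop_edge_le] by (auto simp: component_def m'_def)
qed

definition adj_closed :: "nat \<Rightarrow> (nat \<times> nat \<Rightarrow> nat) \<Rightarrow> nat set \<Rightarrow> bool" where
  "adj_closed n m S \<longleftrightarrow> (\<forall>x y. x \<in> S \<longrightarrow> adj n m x y \<longrightarrow> y \<in> S)"

lemma adj_closed_antimono: "m1 \<le> m2 \<Longrightarrow> adj_closed n m2 S \<Longrightarrow> adj_closed n m1 S"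
  by (auto simp: adj_closed_def dest: adj_mono)

lemma adj_closed_component: "adj_closed n m (component n m v)"
  by (auto simp: adj_closed_def component_def adj_def intro: rtranclp.rtrancl_into_rtrancl)

lemma component_subset_adj_closed:
  assumes "adj_closed n m S" and "u \<in> S"
  shows "component n m u \<subseteq> S"
proof
  fix w assume "w \<in> component n m u"
  then have "(adj n m)\<^sup>*\<^sup>* u w"
    by (simp add: component_def)
  then show "w \<in> S"
    by (induction rule: rtranclp_induct) (use assms in \<open>auto simp: adj_closed_def\<close>)
qed

text \<open>The number of components meeting \<open>S\<close>, if \<open>S\<close> is a union of components.\<close>
definition component_count :: "nat \<Rightarrow> (nat \<times> nat \<Rightarrow> nat) \<Rightarrow> nat set \<Rightarrow> real" where
  "component_count n m S = (\<Sum>u\<in>S. 1 / real (card (component n m u)))"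

text \<open>Acyclicity of the multigraph on \<open>S\<close>, phrased as: every edge copy inside \<open>S\<close> is a bridge.\<close>
definition forest_on :: "nat \<Rightarrow> (nat \<times> nat \<Rightarrow> nat) \<Rightarrow> nat set \<Rightarrow> bool" where
  "forest_on n m S \<longleftrightarrow> (\<forall>a b. (a, b) \<in> edge_pairs n \<longrightarrow> a \<in> S \<longrightarrow> b \<in> S \<longrightarrow> 0 < m (a, b) \<longrightarrow>
      \<not> (adj n (drop_edge m (a, b)))\<^sup>*\<^sup>* a b)"

lemma forest_on_antimono:
  assumes "m1 \<le> m2" and "forest_on n m2 S"
  shows "forest_on n m1 S"
  unfolding forest_on_def
proof (intro allI impI)
  fix a b assume ab: "(a, b) \<in> edge_pairs n" "a \<in> S" "b \<in> S" "0 < m1 (a, b)"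
  then have "0 < m2 (a, b)"
    using assms(1) by (auto simp: le_fun_def intro: less_le_trans)
  with ab assms(2) have "\<not> (adj n (drop_edge m2 (a, b)))\<^sup>*\<^sup>* a b"
    by (simp add: forest_on_def)
  then show "\<not> (adj n (drop_edge m1 (a, b)))\<^sup>*\<^sup>* a b"
    using adj_rtranclp_mono[OF drop_edge_mono[OF assms(1)]] by blast
qed

lemma component_drop_edge_subset_adj_closed:
  assumes "adj_closed n m S" and "(a, b) \<in> edge_pairs n" "a \<in> S" "0 < m (a, b)"
  shows "component n (drop_edge m (a, b)) a \<union> component n (drop_edge m (a, b)) b \<subseteq> S"
proof -
  have "adj n m a b"
    using assms(2,4) by (auto simp: edge_pairs_def adj_def mult_def)
  then have "b \<in> S"
    using assms(1,3) by (auto simp: adj_closed_def)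
  moreover have "adj_closed n (drop_edge m (a, b)) S"
    by (rule adj_closed_antimono[OF drop_edge_le assms(1)])
  ultimately show ?thesis
    using component_subset_adj_closed assms(3) by blast
qed

lemma component_count_drop_bridge:
  fixes m :: "nat \<times> nat \<Rightarrow> nat" and a b :: nat
  defines "m' \<equiv> drop_edge m (a, b)"
  assumes S: "finite S" "S \<subseteq> {..<n}" "adj_closed n m S"
    and ab: "(a, b) \<in> edge_pairs n" "a \<in> S" "0 < m (a, b)"
    and bridge: "\<not> (adj n m')\<^sup>*\<^sup>* a b"
  shows "component_count n m' S = component_count n m S + 1"
proof -
  define A where "A = component n m' a"
  define B where "B = component n m' b"
  have "a < n" "b < n"
    using ab by (auto simp: edge_pairs_def)
  have AB_sub: "A \<union> B \<subseteq> S"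
    unfolding A_def B_def m'_def by (rule component_drop_edge_subset_adj_closed[OF S(3) ab])
  have "A \<inter> B = {}"
    unfolding A_def B_def by (rule component_disjoint[OF bridge])
  then have "(\<Sum>u\<in>A \<union> B. 1 / real (card (component n m' u))) = 2"
    using sum_inverse_card_component[OF \<open>a < n\<close>] sum_inverse_card_component[OF \<open>b < n\<close>]
    by (simp add: sum.union_disjoint finite_component A_def B_def)
  moreover have "(\<Sum>u\<in>A \<union> B. 1 / real (card (component n m u))) = 1"
  proof -
    have "a \<in> A"
      by (simp add: A_def component_self \<open>a < n\<close>)
    then have "A \<union> B = component n m a"
      using component_drop_edge_joined[of a b n m a] ab by (simp add: A_def B_def m'_def)
    then show ?thesis
      using sum_inverse_card_component[OF \<open>a < n\<close>] by simp
  qed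
  moreover have "(\<Sum>u\<in>S - (A \<union> B). 1 / real (card (component n m' u)))
      = (\<Sum>u\<in>S - (A \<union> B). 1 / real (card (component n m u)))"
  proof (rule sum.cong[OF refl])
    fix u assume "u \<in> S - (A \<union> B)"
    then have "component n m u = component n m' u"
      using component_drop_edge_other[of u n m a b] S(2) by (auto simp: A_def B_def m'_def)
    then show "1 / real (card (component n m' u)) = 1 / real (card (component n m u))"
      by simp
  qed
  ultimately show ?thesis
    unfolding component_count_def
    using sum.subset_diff[OF AB_sub S(1), of "\<lambda>u. 1 / real (card (component n m' u))"]
      sum.subset_diff[OF AB_sub S(1), of "\<lambda>u. 1 / real (card (component n m u))"]
    by linarith
qed

lemma finite_edge_pairs: "finite (edge_pairs n)"
  by (rule finite_subset[of _ "{..<n} \<times> {..<n}"]) (auto simp: edge_pairs_def)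

lemma edges_in_pos:
  assumes "adj n m x y" and "x \<in> S" and "y \<in> S"
  shows "0 < edges_in n m S"
proof -
  have "(min x y, max x y) \<in> edge_pairs n \<inter> (S \<times> S)" "0 < m (min x y, max x y)"
    using assms by (auto simp: adj_def mult_def edge_pairs_def min_def max_def)
  then show ?thesis
    unfolding edges_in_def by (intro sum_pos2[where i = "(min x y, max x y)"]) (auto simp: finite_edge_pairs)
qed

lemma edges_in_drop_edge:
  assumes "p \<in> edge_pairs n \<inter> (S \<times> S)" and "0 < m p"
  shows "edges_in n (drop_edge m p) S + 1 = edges_in n m S"
proof -
  have fin: "finite (edge_pairs n \<inter> (S \<times> S))"
    using finite_edge_pairs by blast
  have "(\<Sum>q\<in>edge_pairs n \<inter> (S \<times> S) - {p}. drop_edge m p q)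
      = (\<Sum>q\<in>edge_pairs n \<inter> (S \<times> S) - {p}. m q)"
    by (rule sum.cong) (auto simp: drop_edge_def)
  then show ?thesis
    using assms sum.remove[OF fin assms(1), of m] sum.remove[OF fin assms(1), of "drop_edge m p"]
    by (simp add: edges_in_def drop_edge_def)
qed

lemma component_eq_singleton_if_no_edges:
  assumes "S \<subseteq> {..<n}" "adj_closed n m S" "edges_in n m S = 0" and "u \<in> S"
  shows "component n m u = {u}"
proof -
  have "w = u" if "(adj n m)\<^sup>*\<^sup>* u w" for w
    using that
  proof (cases rule: converse_rtranclpE)
    case (step y)
    then have "y \<in> S"
      using assms(2,4) by (auto simp: adj_closed_def)
    with step(1) assms(4) have "0 < edges_in n m S"
      by (rule edges_in_pos)
    with assms(3) show ?thesis
      by simp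
  qed simp
  then show ?thesis
    using assms(1,4) by (auto simp: component_def)
qed

lemma edges_in_add_component_count_forest:
  assumes "finite S" "S \<subseteq> {..<n}" "adj_closed n m S" "forest_on n m S"
  shows "real (edges_in n m S) + component_count n m S = real (card S)"
  using assms
proof (induction "edges_in n m S" arbitrary: m)
  case 0
  have "component n m u = {u}" if "u \<in> S" for u
    by (rule component_eq_singleton_if_no_edges[OF 0(3,4) 0(1)[symmetric] that])
  then show ?case
    using 0(1)[symmetric] by (simp add: component_count_def)
next
  case (Suc e m)
  have "sum m (edge_pairs n \<inter> (S \<times> S)) \<noteq> 0"
    using Suc(2) by (simp add: edges_in_def)
  then obtain p where p: "p \<in> edge_pairs n \<inter> (S \<times> S)" "0 < m p"
    by (meson gr0I sum.neutral)
  obtain a b where "p = (a, b)"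
    by fastforce
  with p have ab: "(a, b) \<in> edge_pairs n \<inter> (S \<times> S)" "0 < m (a, b)"
    by simp_all
  define m' where "m' = drop_edge m (a, b)"
  have e: "e = edges_in n m' S"
    using edges_in_drop_edge[of "(a, b)" n S m] ab Suc(2) by (simp add: m'_def)
  have "real (edges_in n m' S) + component_count n m' S = real (card S)"
    using Suc(1)[OF e Suc(3,4)] adj_closed_antimono[OF drop_edge_le Suc(5)]
      forest_on_antimono[OF drop_edge_le Suc(6)]
    by (simp add: m'_def)
  moreover have "\<not> (adj n m')\<^sup>*\<^sup>* a b"
    using Suc(6) ab by (simp add: forest_on_def m'_def)
  then have "component_count n m' S = component_count n m S + 1"
    using component_count_drop_bridge[of S n m a b] Suc(3,4,5) ab by (simp add: m'_def)
  ultimately show ?case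
    using e Suc(2) by simp
qed

lemma not_tree_component_obtains_cycle_edge:
  assumes "v < n" and "\<not> is_tree_component n m (component n m v)"
  obtains a b where "(a, b) \<in> edge_pairs n" "a \<in> component n m v" "b \<in> component n m v"
    "0 < m (a, b)" "(adj n (drop_edge m (a, b)))\<^sup>*\<^sup>* a b"
proof -
  have "\<not> forest_on n m (component n m v)"
  proof
    assume "forest_on n m (component n m v)"
    then have "real (edges_in n m (component n m v)) + component_count n m (component n m v)
        = real (card (component n m v))"
      by (rule edges_in_add_component_count_forest[OF finite_component component_subset_lessThan
            adj_closed_component])
    moreover have "component_count n m (component n m v) = 1"
      using sum_inverse_card_component[OF assms(1)] by (simp add: component_count_def)
    ultimately have "real (edges_in n m (component n m v)) + 1 = real (card (component n m v))"
      by simp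
    with assms(2) show False
      unfolding is_tree_component_def by linarith
  qed
  then show ?thesis
    using that unfolding forest_on_def by blast
qed

lemma pmf_poisson_Suc_mult:
  assumes "r > 0"
  shows "pmf (poisson_pmf r) (Suc j) * real (Suc j) = r * pmf (poisson_pmf r) j"
proof -
  have "fact j + fact j * real j > 0"
    by (simp add: add_pos_nonneg)
  then show ?thesis
    using assms by (simp add: pmf_poisson field_simps)
qed

lemma nn_integral_pois_size_bias:
  fixes g :: "nat \<Rightarrow> ennreal"
  assumes "r \<ge> 0"
  shows "(\<integral>\<^sup>+ y. of_nat y * g (y - 1) \<partial>pois r) = ennreal r * (\<integral>\<^sup>+ y. g y \<partial>pois r)"
proof (cases "r = 0")
  case True
  then show ?thesis
    by (simp add: pois_def)
next
  case False
  with assms have "r > 0"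
    by simp
  let ?P = "poisson_pmf r"
  have P: "pois r = ?P"
    using \<open>r > 0\<close> by (simp add: pois_def)
  define F where "F y = ennreal (pmf ?P y) * (of_nat y * g (y - 1))" for y
  have shift: "F (Suc j) = ennreal r * (ennreal (pmf ?P j) * g j)" for j
  proof -
    have "F (Suc j) = ennreal (pmf ?P (Suc j) * real (Suc j)) * g j"
      unfolding F_def by (simp add: ennreal_of_nat_eq_real_of_nat ennreal_mult mult.assoc)
    also have "\<dots> = ennreal (r * pmf ?P j) * g j"
      by (simp only: pmf_poisson_Suc_mult[OF \<open>r > 0\<close>])
    also have "\<dots> = ennreal r * (ennreal (pmf ?P j) * g j)"
      using \<open>r > 0\<close> by (subst ennreal_mult) (auto simp: mult.assoc)
    finally show ?thesis .
  qed
  have "(\<integral>\<^sup>+ y. of_nat y * g (y - 1) \<partial>pois r) = (\<Sum>y. F y)"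
    unfolding P F_def by (simp add: nn_integral_measure_pmf nn_integral_count_space_nat)
  also have "\<dots> = (\<Sum>j. F (Suc j))"
  proof -
    have "(\<Sum>y. F y) = (\<Sum>j. F (j + 1)) + (\<Sum>j<1. F j)"
      by (rule suminf_offset) (rule summableI)
    moreover have "F 0 = 0"
      by (simp add: F_def)
    ultimately show ?thesis
      by simp
  qed
  also have "\<dots> = ennreal r * (\<Sum>j. ennreal (pmf ?P j) * g j)"
    by (simp add: shift)
  also have "(\<Sum>j. ennreal (pmf ?P j) * g j) = (\<integral>\<^sup>+ y. g y \<partial>pois r)"
    unfolding P by (simp add: nn_integral_measure_pmf nn_integral_count_space_nat)
  finally show ?thesis .
qed

lemma nn_integral_Pi_pois_size_bias:
  fixes g :: "('a \<Rightarrow> nat) \<Rightarrow> ennreal" and r :: "'a \<Rightarrow> real"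
  assumes "finite E" "p \<in> E" "r p \<ge> 0"
  shows "(\<integral>\<^sup>+ m. of_nat (m p) * g (drop_edge m p) \<partial>Pi_pmf E 0 (\<lambda>q. pois (r q)))
       = ennreal (r p) * (\<integral>\<^sup>+ m. g m \<partial>Pi_pmf E 0 (\<lambda>q. pois (r q)))"
proof -
  let ?R = "Pi_pmf (E - {p}) 0 (\<lambda>q. pois (r q))"
  have E: "E = insert p (E - {p})"
    using assms(2) by blast
  have decomp: "Pi_pmf E 0 (\<lambda>q. pois (r q)) = map_pmf (\<lambda>(y, f). f(p := y)) (pair_pmf (pois (r p)) ?R)"
    by (subst E) (rule Pi_pmf_insert, use assms(1) in auto)
  define G where "G z = (\<integral>\<^sup>+ f. g (f(p := z)) \<partial>?R)" for z
  have "(\<integral>\<^sup>+ m. of_nat (m p) * g (drop_edge m p) \<partial>Pi_pmf E 0 (\<lambda>q. pois (r q)))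
      = (\<integral>\<^sup>+ y. of_nat y * G (y - 1) \<partial>pois (r p))"
    unfolding decomp G_def
    by (simp add: nn_integral_pair_pmf' case_prod_unfold drop_edge_def nn_integral_cmult)
  also have "\<dots> = ennreal (r p) * (\<integral>\<^sup>+ y. G y \<partial>pois (r p))"
    by (rule nn_integral_pois_size_bias[OF assms(3)])
  also have "(\<integral>\<^sup>+ y. G y \<partial>pois (r p)) = (\<integral>\<^sup>+ m. g m \<partial>Pi_pmf E 0 (\<lambda>q. pois (r q)))"
    unfolding decomp G_def by (simp add: nn_integral_pair_pmf' case_prod_unfold)
  finally show ?thesis .
qed

definition in_component_of_order :: "nat \<Rightarrow> nat \<Rightarrow> nat \<Rightarrow> (nat \<times> nat \<Rightarrow> nat) \<Rightarrow> nat \<times> nat \<Rightarrow> bool" where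
  "in_component_of_order n k v m p \<longleftrightarrow>
     card (component n m v) = k \<and> fst p \<in> component n m v \<and> snd p \<in> component n m v"

lemma Nkc_le_sum_cycle_edges:
  "Nkc n k m \<le> (\<Sum>v<n. \<Sum>p\<in>edge_pairs n. m p * of_bool (in_component_of_order n k v (drop_edge m p) p))"
proof -
  let ?T = "\<lambda>v. card (component n m v) = k \<and> \<not> is_tree_component n m (component n m v)"
  have cycle_edge: "1 \<le> (\<Sum>p\<in>edge_pairs n. m p * of_bool (in_component_of_order n k v (drop_edge m p) p))"
    if "v < n" "?T v" for v
  proof -
    obtain a b where ab: "(a, b) \<in> edge_pairs n" "a \<in> component n m v" "b \<in> component n m v"
      "0 < m (a, b)" "(adj n (drop_edge m (a, b)))\<^sup>*\<^sup>* a b"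
      using not_tree_component_obtains_cycle_edge \<open>v < n\<close> \<open>?T v\<close> by blast
    then have "in_component_of_order n k v (drop_edge m (a, b)) (a, b)"
      using \<open>?T v\<close> by (simp add: in_component_of_order_def component_drop_cycle_edge)
    then have "1 \<le> m (a, b) * of_bool (in_component_of_order n k v (drop_edge m (a, b)) (a, b))"
      using ab(4) by simp
    also have "\<dots> \<le> (\<Sum>p\<in>edge_pairs n. m p * of_bool (in_component_of_order n k v (drop_edge m p) p))"
      by (rule member_le_sum[OF ab(1)]) (simp_all add: finite_edge_pairs)
    finally show ?thesis .
  qed
  have "Nkc n k m = (\<Sum>v<n. of_bool (?T v))"
    by (simp add: Nkc_def lessThan_def Collect_conj_eq Int_commute)
  also have "\<dots> \<le> (\<Sum>v<n. \<Sum>p\<in>edge_pairs n. m p * of_bool (in_component_of_order n k v (drop_edge m p) p))"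
    by (rule sum_mono) (use cycle_edge in auto)
  finally show ?thesis .
qed

lemma card_in_component_of_order_le:
  "card (edge_pairs n \<inter> {p. in_component_of_order n k v m p}) \<le> k * k"
proof (cases "card (component n m v) = k")
  case True
  have "card (edge_pairs n \<inter> {p. in_component_of_order n k v m p})
      \<le> card (component n m v \<times> component n m v)"
    by (rule card_mono) (auto simp: finite_component in_component_of_order_def)
  with True show ?thesis
    by (simp add: card_cartesian_product)
next
  case False
  then show ?thesis
    by (simp add: in_component_of_order_def)
qed

definition max_entry :: "(nat \<Rightarrow> nat \<Rightarrow> nat \<Rightarrow> real) \<Rightarrow> nat \<Rightarrow> real" where
  "max_entry A n = Max ({A n i j | i j. i < n \<and> j < n} \<union> {0})"

lemma finite_entries:
  fixes A :: "nat \<Rightarrow> nat \<Rightarrow> nat \<Rightarrow> real"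
  shows "finite {A n i j | i j. i < n \<and> j < n}"
  by (rule finite_image_set2) simp_all

lemma max_entry_ge: "i < n \<Longrightarrow> j < n \<Longrightarrow> A n i j \<le> max_entry A n"
  unfolding max_entry_def by (rule Max_ge) (use finite_entries in auto)

lemma max_entry_nonneg: "0 \<le> max_entry A n"
  unfolding max_entry_def by (rule Max_ge) (use finite_entries in auto)

lemma nn_integral_Nkc_le_Pi_pois:
  fixes r :: "nat \<times> nat \<Rightarrow> real"
  assumes r_nonneg: "\<And>p. p \<in> edge_pairs n \<Longrightarrow> 0 \<le> r p"
    and r_le: "\<And>p. p \<in> edge_pairs n \<Longrightarrow> r p \<le> c"
  shows "(\<integral>\<^sup>+ m. of_nat (Nkc n k m) \<partial>Pi_pmf (edge_pairs n) 0 (\<lambda>q. pois (r q)))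
    \<le> ennreal c * of_nat n * of_nat (k * k)"
proof -
  let ?P = "Pi_pmf (edge_pairs n) 0 (\<lambda>q. pois (r q))"
  define H where "H v m p = (of_bool (in_component_of_order n k v m p) :: ennreal)" for v m p
  have H_sum: "(\<Sum>p\<in>edge_pairs n. H v m p) \<le> of_nat (k * k)" for v m
  proof -
    have "(of_nat (card (edge_pairs n \<inter> {p. in_component_of_order n k v m p})) :: ennreal)
        \<le> of_nat (k * k)"
      by (rule of_nat_mono[OF card_in_component_of_order_le])
    then show ?thesis
      by (simp add: H_def finite_edge_pairs)
  qed
  have "(\<integral>\<^sup>+ m. of_nat (Nkc n k m) \<partial>?P)
      \<le> (\<integral>\<^sup>+ m. (\<Sum>v<n. \<Sum>p\<in>edge_pairs n. of_nat (m p) * H v (drop_edge m p) p) \<partial>?P)"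
  proof (rule nn_integral_mono)
    fix m
    have "(of_nat (Nkc n k m) :: ennreal)
        \<le> of_nat (\<Sum>v<n. \<Sum>p\<in>edge_pairs n. m p * of_bool (in_component_of_order n k v (drop_edge m p) p))"
      by (rule of_nat_mono[OF Nkc_le_sum_cycle_edges])
    then show "of_nat (Nkc n k m) \<le> (\<Sum>v<n. \<Sum>p\<in>edge_pairs n. of_nat (m p) * H v (drop_edge m p) p)"
      by (simp only: H_def of_nat_sum of_nat_mult of_nat_of_bool)
  qed
  also have "\<dots> = (\<Sum>v<n. \<Sum>p\<in>edge_pairs n. \<integral>\<^sup>+ m. of_nat (m p) * H v (drop_edge m p) p \<partial>?P)"
    by (simp add: nn_integral_sum)
  also have "\<dots> = (\<Sum>v<n. \<Sum>p\<in>edge_pairs n. ennreal (r p) * (\<integral>\<^sup>+ m. H v m p \<partial>?P))"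
    by (intro sum.cong refl nn_integral_Pi_pois_size_bias finite_edge_pairs r_nonneg)
  also have "\<dots> \<le> (\<Sum>v<n. \<Sum>p\<in>edge_pairs n. ennreal c * (\<integral>\<^sup>+ m. H v m p \<partial>?P))"
    by (intro sum_mono mult_right_mono ennreal_leI r_le) auto
  also have "\<dots> = ennreal c * (\<Sum>v<n. \<integral>\<^sup>+ m. (\<Sum>p\<in>edge_pairs n. H v m p) \<partial>?P)"
    by (simp add: nn_integral_sum sum_distrib_left)
  also have "\<dots> \<le> ennreal c * (\<Sum>v<n. \<integral>\<^sup>+ m. of_nat (k * k) \<partial>?P)"
    by (intro mult_left_mono sum_mono nn_integral_mono H_sum) simp
  also have "\<dots> = ennreal c * of_nat n * of_nat (k * k)"
    by (simp add: measure_pmf.emeasure_space_1 mult.assoc)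
  finally show ?thesis .
qed

lemma nn_integral_Nkc_le:
  assumes nonneg: "\<And>i j. i < n \<Longrightarrow> j < n \<Longrightarrow> 0 \<le> A n i j"
  shows "(\<integral>\<^sup>+ m. of_nat (Nkc n k m) \<partial>G_PM A n) \<le> ennreal (max_entry A n) * of_nat (k * k)"
proof -
  define r where "r = (\<lambda>(i, j). A n i j / real n)"
  define c where "c = max_entry A n / real n"
  have G: "G_PM A n = Pi_pmf (edge_pairs n) 0 (\<lambda>q. pois (r q))"
    by (simp add: G_PM_def r_def case_prod_unfold)
  have r: "0 \<le> r p" "r p \<le> c" if "p \<in> edge_pairs n" for p
    using that nonneg max_entry_ge[of "fst p" n "snd p" A]
    by (auto simp: r_def c_def edge_pairs_def divide_right_mono)
  have "(\<integral>\<^sup>+ m. of_nat (Nkc n k m) \<partial>G_PM A n) \<le> ennreal c * of_nat n * of_nat (k * k)"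
    unfolding G by (rule nn_integral_Nkc_le_Pi_pois) (use r in auto)
  also have "\<dots> \<le> ennreal (max_entry A n) * of_nat (k * k)"
  proof -
    have "0 \<le> c"
      by (simp add: c_def max_entry_nonneg)
    then have "ennreal c * of_nat n = ennreal (c * real n)"
      by (simp only: ennreal_of_nat_eq_real_of_nat ennreal_mult')
    moreover have "c * real n \<le> max_entry A n"
      using max_entry_nonneg by (cases "n = 0") (simp_all add: c_def)
    ultimately show ?thesis
      by (simp add: mult_right_mono ennreal_leI)
  qed
  finally show ?thesis .
qed

lemma expectation_Nkc_le:
  assumes "\<And>i j. i < n \<Longrightarrow> j < n \<Longrightarrow> 0 \<le> A n i j"
  shows "measure_pmf.expectation (G_PM A n) (\<lambda>m. real (Nkc n k m)) \<le> real (k * k) * max_entry A n"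
proof -
  have "(\<integral>\<^sup>+ m. ennreal (real (Nkc n k m)) \<partial>G_PM A n) = (\<integral>\<^sup>+ m. of_nat (Nkc n k m) \<partial>G_PM A n)"
    by (simp add: ennreal_of_nat_eq_real_of_nat)
  then have "measure_pmf.expectation (G_PM A n) (\<lambda>m. real (Nkc n k m))
      = enn2real (\<integral>\<^sup>+ m. of_nat (Nkc n k m) \<partial>G_PM A n)"
    by (subst integral_eq_nn_integral) auto
  also have "\<dots> \<le> enn2real (ennreal (max_entry A n) * of_nat (k * k))"
  proof (rule enn2real_mono[OF nn_integral_Nkc_le[of n A k, OF assms]])
    show "ennreal (max_entry A n) * of_nat (k * k) < \<top>"
      using ennreal_mult_less_top of_nat_less_top by auto
  qed
  also have "\<dots> = real (k * k) * max_entry A n"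
    by (simp add: ennreal_of_nat_eq_real_of_nat enn2real_mult max_entry_nonneg)
  finally show ?thesis .
qed

theorem mainTheorem14:
  fixes A :: "nat \<Rightarrow> nat \<Rightarrow> nat \<Rightarrow> real" and k :: nat
  assumes "well_behaved A" and "k \<ge> 2"
  shows "(\<lambda>n. measure_pmf.expectation (G_PM A n) (\<lambda>m. real (Nkc n k m)))
           \<in> o(\<lambda>n. real n)"
proof -
  have nonneg: "0 \<le> A n i j" if "i < n" "j < n" for n i j
    using assms(1) that by (simp add: well_behaved_def)
  have "max_entry A \<in> o(\<lambda>n. real n)"
    using assms(1) by (simp add: well_behaved_def max_entry_def[abs_def])
  moreover have "(\<lambda>n. measure_pmf.expectation (G_PM A n) (\<lambda>m. real (Nkc n k m))) \<in> O(max_entry A)"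
  proof (rule bigoI[where c = "real (k * k)"], intro always_eventually allI)
    fix n
    show "norm (measure_pmf.expectation (G_PM A n) (\<lambda>m. real (Nkc n k m)))
        \<le> real (k * k) * norm (max_entry A n)"
      using expectation_Nkc_le[of n A k] nonneg max_entry_nonneg[of A n] by simp
  qed
  ultimately show ?thesis
    using landau_o.big_small_trans by blast
qed

end
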